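(* Let $q\ge1$, $c>0$, $\theta\in\mathbb R$, $n\in\{1,\dots,N\}$, and $\varphi_n(t)=\theta-\lambda_n(t-t_{n-1})$ on $I_n$ with $\lambda_n=\zeta_q/\tau_n$, $\zeta_q=\frac1{4(2q+1)}$. For every $u\in\mathcal V_{h,\tau}^{p,q}$ write $u|_{Q_n}(x,t)=\sigma_n(x)L_q(t)+(\Pi_{q-1}^tu)(x,t)$, where $L_q$ is the Legendre polynomial of degree $q$ on $I_n$ normalized by $L_q(t_n)=1$. Then $$-c^2\big(\nabla u,(\mathrm{Id}-\Pi_{q-1}^t)(\varphi_n\nabla\partial_tu)\big)_{Q_n}=\frac{c^2q\,\zeta_q}{2q+1}\|\nabla\sigma_n\|_{L^2(\Omega)^d}^2\ \ge0.$$
   Context: $\Omega\subset\mathbb R^d$ bounded polytopic, $\mathcal T_h$ a simplicial mesh, $\mathcal V_h^p=\{v\in H^1_0(\Omega):v|_K\in\mathbb P^p(K)\}$; time partition $0=t_0<\dots<t_N=T$, $I_n=(t_{n-1},t_n)$, $\tau_n=|I_n|$, $Q_n=\Omega\times I_n$; $\mathcal V_{h,\tau}^{p,q}=\{v\in C^0([0,T];H^1_0(\Omega)):v|_{Q_n}\in\mathbb P^q(I_n;\mathcal V_h^p)\ \forall n\}$. $\Pi_{q-1}^t$ is the $L^2$-orthogonal projection in time onto polynomials of degree at most $q-1$ on each $I_n$, applied pointwise in space (and componentwise to vector fields); $(\cdot,\cdot)_{Q_n}$ is the $L^2(Q_n)$ inner product. *)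

theory Defs
  imports "HOL-Analysis.Analysis" "HOL-Computational_Algebra.Polynomial"
begin

definition mpoly_le :: "nat \<Rightarrow> (real^'d \<Rightarrow> real) \<Rightarrow> bool" where
  "mpoly_le p P \<longleftrightarrow> (\<exists>c :: ('d \<Rightarrow> nat) \<Rightarrow> real.
      \<forall>x. P x = (\<Sum>\<alpha>\<in>{\<alpha>. sum \<alpha> UNIV \<le> p}. c \<alpha> * (\<Prod>i\<in>UNIV. (x$i) ^ (\<alpha> i))))"

definition is_simplex :: "(real^'d) set \<Rightarrow> (real^'d) set \<Rightarrow> bool" where
  "is_simplex S K \<longleftrightarrow> finite S \<and> card S = CARD('d) + 1 \<and> \<not> affine_dependent S \<and> K = convex hull S"

definition simplicial_mesh :: "(real^'d) set \<Rightarrow> (real^'d) set set \<Rightarrow> bool" where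
  "simplicial_mesh \<Omega> Th \<longleftrightarrow> finite Th \<and> (\<forall>K\<in>Th. \<exists>S. is_simplex S K) \<and> \<Union>Th = closure \<Omega> \<and>
     (\<forall>K\<in>Th. \<forall>K'\<in>Th. K \<noteq> K' \<longrightarrow>
        (\<exists>S S'. is_simplex S K \<and> is_simplex S' K' \<and> K \<inter> K' = convex hull (S \<inter> S')))"

text \<open>V_h^p: continuous piecewise polynomials of degree p vanishing on the boundary
  (continuous representatives of the H^1_0 functions that are piecewise P^p).\<close>
definition Vh :: "(real^'d) set \<Rightarrow> (real^'d) set set \<Rightarrow> nat \<Rightarrow> (real^'d \<Rightarrow> real) set" where
  "Vh \<Omega> Th p = {v. (\<forall>K\<in>Th. \<exists>P. mpoly_le p P \<and> (\<forall>x\<in>K. v x = P x)) \<and> (\<forall>x\<in>frontier \<Omega>. v x = 0)}"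

definition time_partition :: "(nat \<Rightarrow> real) \<Rightarrow> nat \<Rightarrow> real \<Rightarrow> bool" where
  "time_partition tt N T \<longleftrightarrow> tt 0 = 0 \<and> tt N = T \<and> (\<forall>n\<in>{1..N}. tt (n - 1) < tt n)"

text \<open>V_{h,tau}^{p,q}: on each closed slab [t_{n-1},t_n] a polynomial of degree q in time with
  coefficients in V_h^p; using closed intervals encodes continuity in time.\<close>
definition Vht :: "(real^'d) set \<Rightarrow> (real^'d) set set \<Rightarrow> nat \<Rightarrow> (nat \<Rightarrow> real) \<Rightarrow> nat \<Rightarrow> nat
    \<Rightarrow> (real^'d \<Rightarrow> real \<Rightarrow> real) set" where
  "Vht \<Omega> Th p tt N q = {u. \<forall>n\<in>{1..N}. \<exists>v. (\<forall>j\<le>q. v j \<in> Vh \<Omega> Th p) \<and>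
      (\<forall>x. \<forall>s\<in>{tt (n - 1)..tt n}. u x s = (\<Sum>j\<le>q. v j x * s ^ j))}"

definition tproj :: "real \<Rightarrow> real \<Rightarrow> nat \<Rightarrow> (real \<Rightarrow> real) \<Rightarrow> real \<Rightarrow> real" where
  "tproj a b k g = poly (THE P. degree P \<le> k \<and>
      (\<forall>r :: real poly. degree r \<le> k \<longrightarrow> integral {a..b} (\<lambda>s. (g s - poly P s) * poly r s) = 0))"

definition tprojv :: "real \<Rightarrow> real \<Rightarrow> nat \<Rightarrow> (real \<Rightarrow> real^'d) \<Rightarrow> real \<Rightarrow> real^'d" where
  "tprojv a b k G s = (\<chi> i. tproj a b k (\<lambda>r. G r $ i) s)"

text \<open>Legendre polynomial of degree q transported to [a,b], normalized by value 1 at b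
  (shifted Legendre polynomial in (t-a)/(b-a)).\<close>
definition legendre_on :: "real \<Rightarrow> real \<Rightarrow> nat \<Rightarrow> real \<Rightarrow> real" where
  "legendre_on a b q t = (\<Sum>k\<le>q. (-1) ^ (q + k) * real (q choose k) * real ((q + k) choose k)
                                  * ((t - a) / (b - a)) ^ k)"

definition grad :: "(real^'d \<Rightarrow> real) \<Rightarrow> real^'d \<Rightarrow> real^'d" where
  "grad f x = (\<chi> i. frechet_derivative f (at x) (axis i 1))"

end

theory Submission
  imports Defs
begin

text \<open>On the slab Q_n, u is a polynomial \<Sum>_j v_j(x) t^j of degree q in time with coefficients
  v_j in V_h^p. For a polynomial g of degree q in t, g - \<Pi>_{q-1} g is a multiple of L_q, namely
  (leading coefficient of g / \<ell>) L_q, where \<ell> = C(2q,q)/\<tau>_n^q is the leading coefficient of L_q.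
  Hence \<sigma>_n = v_q/\<ell>, and since \<phi>_n \<nabla>\<partial>_t u has leading coefficient -\<lambda>_n q \<nabla>v_q,
  (Id - \<Pi>_{q-1})(\<phi>_n \<nabla>\<partial>_t u) = -(\<lambda>_n q/\<ell>) L_q \<nabla>v_q. Testing with \<nabla>u = \<Sum>_j t^j \<nabla>v_j,
  orthogonality of L_q to lower degrees leaves only j = q, and \<integral>_{I_n} L_q t^q = \<tau>_n/((2q+1)\<ell>).
  In space all functions are polynomial, hence smooth, off the null set formed by the element
  boundaries.\<close>

section \<open>Shifted Legendre polynomials\<close>

definition legendre_coeff :: "nat \<Rightarrow> nat \<Rightarrow> real" where
  "legendre_coeff q k = (-1)^(q+k) * real (q choose k) * real ((q+k) choose k)"

definition legendre_poly :: "real \<Rightarrow> real \<Rightarrow> nat \<Rightarrow> real poly" where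
  "legendre_poly a b q = (\<Sum>k\<le>q. smult (legendre_coeff q k / (b - a)^k) ([:- a, 1:]^k))"

definition legendre_lead :: "real \<Rightarrow> real \<Rightarrow> nat \<Rightarrow> real" where
  "legendre_lead a b q = real ((2*q) choose q) / (b - a)^q"

lemma legendre_on_altdef:
  "legendre_on a b q s = (\<Sum>k\<le>q. legendre_coeff q k / (b - a)^k * (s - a)^k)"
  unfolding legendre_on_def legendre_coeff_def by (simp add: power_divide)

lemma poly_legendre_poly: "poly (legendre_poly a b q) s = legendre_on a b q s"
  unfolding legendre_poly_def legendre_on_altdef by (simp add: poly_sum poly_power)

lemma degree_legendre_poly: "degree (legendre_poly a b q) \<le> q"
  unfolding legendre_poly_def
  by (intro degree_sum_le order.trans[OF degree_smult_le] order.trans[OF degree_power_le]) auto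

lemma coeff_legendre_poly_top: "coeff (legendre_poly a b q) q = legendre_lead a b q"
proof -
  have "coeff (legendre_poly a b q) q = (\<Sum>k\<le>q. legendre_coeff q k / (b - a)^k * coeff ([:- a, 1:]^k) q)"
    unfolding legendre_poly_def by (simp add: coeff_sum)
  also have "\<dots> = (\<Sum>k\<in>{q}. legendre_coeff q k / (b - a)^k * coeff ([:- a, 1:]^k) q)"
  proof (rule sum.mono_neutral_right)
    show "\<forall>k\<in>{..q} - {q}. legendre_coeff q k / (b - a)^k * coeff ([:- a, 1:]^k) q = 0"
    proof
      fix k assume "k \<in> {..q} - {q}"
      then have "degree ([:- a, 1:]^k) < q"
        using degree_power_le[of "[:- a, 1:]" k] by auto
      then show "legendre_coeff q k / (b - a)^k * coeff ([:- a, 1:]^k) q = 0"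
        by (simp add: coeff_eq_0)
    qed
  qed auto
  also have "\<dots> = legendre_lead a b q"
    by (simp add: coeff_linear_power legendre_coeff_def legendre_lead_def flip: mult_2)
  finally show ?thesis .
qed

lemma legendre_lead_pos: "a < b \<Longrightarrow> legendre_lead a b q > 0"
  unfolding legendre_lead_def by (auto intro!: divide_pos_pos)

lemma legendre_poly_nonzero: "a < b \<Longrightarrow> legendre_poly a b q \<noteq> 0"
  using coeff_legendre_poly_top[of a b q] legendre_lead_pos[of a b q] by auto

lemma legendre_on_nonzero:
  assumes "a < b"
  obtains s where "s \<in> {a<..<b}" "legendre_on a b q s \<noteq> 0"
proof -
  have "\<not> {a<..<b} \<subseteq> {s. poly (legendre_poly a b q) s = 0}"
    using poly_roots_finite[OF legendre_poly_nonzero[OF assms]] infinite_Ioo[OF assms]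
    by (metis finite_subset)
  then obtain s where "s \<in> {a<..<b}" "poly (legendre_poly a b q) s \<noteq> 0" by blast
  then show ?thesis using that by (simp add: poly_legendre_poly)
qed

lemma prod_omit_diff:
  assumes "k \<le> q"
  shows "(\<Prod>j\<in>{..q}-{k}. real j - real k) = (-1)^k * fact k * fact (q - k)"
proof -
  have below: "(\<Prod>j<k. real j - real k) = (-1)^k * fact k"
  proof -
    have "(\<Prod>j<k. real j - real k) = (\<Prod>j<k. (-1) * real (k - j))"
      by (rule prod.cong) auto
    also have "\<dots> = (-1)^k * (\<Prod>j<k. real (k - j))"
      unfolding prod.distrib prod_constant card_lessThan by simp
    also have "(\<Prod>j<k. real (k - j)) = fact k"
      by (simp add: fact_prod_rev lessThan_atLeast0)
    finally show ?thesis .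
  qed
  have above: "(\<Prod>j\<in>{k<..k+d}. real j - real k) = fact d" for d
  proof (induction d)
    case (Suc d)
    have "{k<..k+Suc d} = insert (k + Suc d) {k<..k+d}" by auto
    then show ?case using Suc by (simp add: algebra_simps)
  qed simp
  have split: "{..q}-{k} = {..<k} \<union> {k<..q}" using assms by auto
  have "(\<Prod>j\<in>{..q}-{k}. real j - real k) = (\<Prod>j<k. real j - real k) * (\<Prod>j\<in>{k<..q}. real j - real k)"
    unfolding split by (rule prod.union_disjoint) auto
  moreover have "(\<Prod>j\<in>{k<..q}. real j - real k) = fact (q - k)"
    using above[of "q - k"] assms by simp
  ultimately show ?thesis unfolding below by (simp only:)
qed

lemma prod_neg_shift: "(\<Prod>i<q. - real k - 1 - real i) = (-1)^q * fact (k+q) / fact k"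
proof -
  have "(\<Prod>i<q. - real k - 1 - real i) = (\<Prod>i<q. (-1) * (real k + 1 + real i))"
    by (rule prod.cong) auto
  also have "\<dots> = (-1)^q * pochhammer (real k + 1) q"
    unfolding prod.distrib prod_constant card_lessThan pochhammer_prod lessThan_atLeast0 by simp
  also have "fact (k+q) = fact k * pochhammer (real k + 1) q"
    using pochhammer_product[of k "k+q" "1::real"] by (simp add: pochhammer_fact add.commute)
  then have "pochhammer (real k + 1) q = fact (k+q) / fact k"
    by (simp add: field_simps)
  finally show ?thesis by simp
qed

lemma legendre_coeff_residue:
  assumes "k \<le> q"
  shows "legendre_coeff q k * (\<Prod>j\<in>{..q}-{k}. real j - real k) = (\<Prod>i<q. - real k - 1 - real i)"
proof -
  have b1: "real (q choose k) = fact q / (fact k * fact (q - k))" using assms by (rule binomial_fact)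
  have b2: "real ((q+k) choose k) = fact (q+k) / (fact k * fact q)" using binomial_fact[of k "q+k"] by simp
  have s: "(-1::real)^(q+k) * (-1)^k = (-1)^q"
    by (simp add: power_add mult.assoc flip: power_add) (simp add: power_add flip: mult_2 power_mult)
  show ?thesis
    unfolding prod_omit_diff[OF assms] prod_neg_shift legendre_coeff_def b1 b2
    using s by (simp add: field_simps add.commute)
qed

text \<open>The partial fraction decomposition
  \<Sum>_k c_k/(z+k+1) = \<Prod>_{i<q}(z-i) / \<Prod>_{j\<le>q}(z+j+1) with denominators cleared: both sides
  have degree at most q and agree at the q+1 poles z = -k-1.\<close>
lemma legendre_coeff_partial_fractions:
  fixes z :: real
  shows "(\<Sum>k\<le>q. legendre_coeff q k * (\<Prod>j\<in>{..q}-{k}. z + real j + 1)) = (\<Prod>i<q. z - real i)"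
proof -
  define R where "R = (\<Sum>k\<le>q. smult (legendre_coeff q k) (\<Prod>j\<in>{..q}-{k}. [:real j + 1, 1:]))
                       - (\<Prod>i<q. [:- real i, 1:])"
  have poly_R: "poly R z = (\<Sum>k\<le>q. legendre_coeff q k * (\<Prod>j\<in>{..q}-{k}. z + real j + 1))
                           - (\<Prod>i<q. z - real i)" for z
    unfolding R_def by (simp add: poly_sum poly_prod algebra_simps)
  have "degree R \<le> q"
    unfolding R_def
    by (intro order.trans[OF degree_diff_le_max] max.boundedI degree_sum_le
          order.trans[OF degree_smult_le] order.trans[OF degree_prod_sum_le]) auto
  have roots: "poly R (- real k - 1) = 0" if k: "k \<le> q" for k
  proof -
    have vanish: "(\<Prod>j\<in>{..q} - {k'}. - real k - 1 + real j + 1) = 0" if "k' \<in> {..q} - {k}" for k'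
      by (rule prod_zero) (use that k in \<open>auto intro!: bexI[where x=k]\<close>)
    have "(\<Sum>k'\<le>q. legendre_coeff q k' * (\<Prod>j\<in>{..q}-{k'}. - real k - 1 + real j + 1))
        = (\<Sum>k'\<in>{k}. legendre_coeff q k' * (\<Prod>j\<in>{..q}-{k'}. - real k - 1 + real j + 1))"
      by (rule sum.mono_neutral_right) (use k vanish in auto)
    also have "\<dots> = legendre_coeff q k * (\<Prod>j\<in>{..q}-{k}. real j - real k)" by simp
    finally show ?thesis using legendre_coeff_residue[OF k] unfolding poly_R by simp
  qed
  have "R = 0"
  proof (rule ccontr)
    assume "R \<noteq> 0"
    have "(\<lambda>k. - real k - 1) ` {..q} \<subseteq> {x. poly R x = 0}" using roots by auto
    then have "card ((\<lambda>k. - real k - 1) ` {..q}) \<le> card {x. poly R x = 0}"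
      by (intro card_mono poly_roots_finite \<open>R \<noteq> 0\<close>)
    also have "\<dots> \<le> degree R" by (rule card_poly_roots_bound[OF \<open>R \<noteq> 0\<close>])
    also have "card ((\<lambda>k. - real k - 1) ` {..q}) = Suc q"
      by (subst card_image) (auto simp: inj_on_def)
    finally show False using \<open>degree R \<le> q\<close> by simp
  qed
  then show ?thesis using poly_R[of z] by simp
qed

lemma legendre_coeff_moment_sum:
  assumes "m \<le> q"
  shows "(\<Sum>k\<le>q. legendre_coeff q k / (real k + real m + 1))
       = (if m < q then 0 else (fact q)^2 / fact (2*q+1))"
proof -
  define D where "D = (\<Prod>j\<le>q. real m + real j + 1)"
  have D_pos: "D > 0" unfolding D_def by (intro prod_pos) auto
  have D_split: "D = (real m + real k + 1) * (\<Prod>j\<in>{..q}-{k}. real m + real j + 1)" if "k \<le> q" for k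
    unfolding D_def using that by (subst prod.remove[of _ k]) auto
  have "(\<Sum>k\<le>q. legendre_coeff q k / (real k + real m + 1))
      = (\<Sum>k\<le>q. legendre_coeff q k * (\<Prod>j\<in>{..q}-{k}. real m + real j + 1)) / D"
    unfolding sum_divide_distrib
    by (rule sum.cong[OF refl]) (use D_split D_pos in \<open>simp add: field_simps\<close>)
  also have "\<dots> = (\<Prod>i<q. real m - real i) / D"
    by (simp add: legendre_coeff_partial_fractions)
  finally have eq: "(\<Sum>k\<le>q. legendre_coeff q k / (real k + real m + 1)) = (\<Prod>i<q. real m - real i) / D" .
  show ?thesis
  proof (cases "m < q")
    case True
    have "(\<Prod>i<q. real m - real i) = 0"
      by (rule prod_zero) (use True in \<open>auto intro!: bexI[where x=m]\<close>)
    then show ?thesis using eq True by simp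
  next
    case False
    then have mq: "m = q" using assms by simp
    have num: "(\<Prod>i<q. real q - real i) = fact q"
      by (simp add: fact_prod_rev lessThan_atLeast0 of_nat_diff)
    have "D = pochhammer (real q + 1) (Suc q)"
      unfolding D_def pochhammer_prod mq by (simp add: atLeast0LessThan lessThan_Suc_atMost algebra_simps)
    moreover have "fact (2*q+1) = fact q * pochhammer (real q + 1) (Suc q)"
      using pochhammer_product[of q "2*q+1" "1::real"] by (simp add: pochhammer_fact add.commute)
    ultimately have "D = fact (2*q+1) / fact q" by (simp add: field_simps)
    then show ?thesis using eq num mq by (simp add: power2_eq_square)
  qed
qed

lemma legendre_top_moment:
  assumes "a < b"
  shows "(b - a)^(q+1) * (fact q)^2 / fact (2*q+1) = (b - a) / ((2 * real q + 1) * legendre_lead a b q)"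
proof -
  have binom: "real ((2*q) choose q) = fact (2*q) / (fact q * fact q)"
    using binomial_fact[of q "2*q"] by (simp add: mult_2)
  have fact_odd: "fact (2*q+1) = (2 * real q + 1) * (fact (2*q) :: real)"
    by (simp add: algebra_simps)
  have "(0::real) < fact (2*q)" "(0::real) < fact q" "0 < (b - a)^q"
    using assms by auto
  then show ?thesis
    unfolding legendre_lead_def binom fact_odd power_add by (simp add: field_simps power2_eq_square)
qed

lemma has_integral_shifted_power:
  "a \<le> b \<Longrightarrow> ((\<lambda>s. (s - a)^n) has_integral (b - a)^(n+1) / real (n+1)) {a..b}"
proof -
  assume ab: "a \<le> b"
  have "((\<lambda>s. (s - a)^(n+1) / real (n+1)) has_vector_derivative (s - a)^n) (at s within {a..b})" for s
    unfolding has_real_derivative_iff_has_vector_derivative[symmetric]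
    by (rule derivative_eq_intros refl | simp)+
  from fundamental_theorem_of_calculus[OF ab this] show ?thesis by simp
qed

lemma legendre_on_moment_integral:
  assumes "a < b"
  shows "((\<lambda>s. legendre_on a b q s * (s - a)^m) has_integral
           (b - a)^(m+1) * (\<Sum>k\<le>q. legendre_coeff q k / (real k + real m + 1))) {a..b}"
proof -
  have "((\<lambda>s. \<Sum>k\<le>q. legendre_coeff q k / (b - a)^k * (s - a)^(k+m)) has_integral
         (\<Sum>k\<le>q. legendre_coeff q k / (b - a)^k * ((b - a)^(k+m+1) / real (k+m+1)))) {a..b}"
    using assms by (intro has_integral_sum has_integral_mult_right has_integral_shifted_power) auto
  moreover have "C / c^k * (c^(k+m+1) / real (k+m+1)) = c^(m+1) * (C / (real k + real m + 1))"
    if "c > 0" for c C :: real and k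
    using that by (simp add: power_add field_simps)
  then have "legendre_coeff q k / (b - a)^k * ((b - a)^(k+m+1) / real (k+m+1))
      = (b - a)^(m+1) * (legendre_coeff q k / (real k + real m + 1))" for k
    using assms by simp
  ultimately show ?thesis
    by (simp add: legendre_on_altdef sum_distrib_right sum_distrib_left power_add mult.assoc)
qed

lemma poly_eq_sum_upto:
  fixes p :: "'a::comm_semiring_1 poly"
  assumes "degree p \<le> n"
  shows "poly p x = (\<Sum>i\<le>n. coeff p i * x^i)"
  by (subst poly_as_sum_of_monoms'[OF assms, symmetric]) (simp add: poly_sum poly_monom)

lemma legendre_on_poly_integral:
  assumes ab: "a < b" and deg: "degree r \<le> q"
  shows "((\<lambda>s. legendre_on a b q s * poly r s) has_integral
           coeff r q * (b - a) / ((2 * real q + 1) * legendre_lead a b q)) {a..b}"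
proof -
  define r' where "r' = r \<circ>\<^sub>p [:a, 1:]"
  have deg': "degree r' \<le> q" unfolding r'_def using deg by (simp add: degree_pcompose)
  have top: "coeff r' q = coeff r q"
  proof (cases "degree r = q")
    case True
    then show ?thesis unfolding r'_def using lead_coeff_comp[of "[:a, 1:]" r]
      by (simp add: degree_pcompose)
  next
    case False
    then show ?thesis using deg deg' unfolding r'_def by (simp add: coeff_eq_0 degree_pcompose)
  qed
  have "poly r s = (\<Sum>m\<le>q. coeff r' m * (s - a)^m)" for s
  proof -
    have "poly r s = poly r' (s - a)" unfolding r'_def by (simp add: poly_pcompose)
    then show ?thesis using poly_eq_sum_upto[OF deg'] by simp
  qed
  then have integrand: "(\<lambda>s. legendre_on a b q s * poly r s)
      = (\<lambda>s. \<Sum>m\<le>q. coeff r' m * (legendre_on a b q s * (s - a)^m))"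
    by (simp add: sum_distrib_left mult_ac)
  have "((\<lambda>s. \<Sum>m\<le>q. coeff r' m * (legendre_on a b q s * (s - a)^m)) has_integral
        (\<Sum>m\<le>q. coeff r' m * ((b - a)^(m+1) * (\<Sum>k\<le>q. legendre_coeff q k / (real k + real m + 1))))) {a..b}"
    using ab by (intro has_integral_sum has_integral_mult_right legendre_on_moment_integral) auto
  also have "(\<Sum>m\<le>q. coeff r' m * ((b - a)^(m+1) * (\<Sum>k\<le>q. legendre_coeff q k / (real k + real m + 1))))
     = coeff r' q * ((b - a)^(q+1) * (fact q)^2 / fact (2*q+1))"
    by (subst sum.mono_neutral_right[of "{..q}" "{q}"]) (auto simp: legendre_coeff_moment_sum)
  finally show ?thesis
    unfolding integrand top legendre_top_moment[OF ab] by simp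
qed

section \<open>The time projection\<close>

lemma poly_eq_0_if_square_integral_0:
  fixes R :: "real poly"
  assumes ab: "a < b" and int0: "((\<lambda>s. poly R s * poly R s) has_integral 0) {a..b}"
  shows "R = 0"
proof (rule ccontr)
  assume "R \<noteq> 0"
  have "poly R s * poly R s = 0" if "s \<in> {a..b}" for s
    by (rule has_integral_0_cbox_imp_0[of a b]) (use int0 ab that in \<open>auto intro!: continuous_intros\<close>)
  then have "{a..b} \<subseteq> {x. poly R x = 0}" by auto
  with poly_roots_finite[OF \<open>R \<noteq> 0\<close>] have "finite {a..b}" by (rule finite_subset[rotated])
  then show False using infinite_Icc[OF ab] by simp
qed

lemma tproj_eqI:
  assumes ab: "a < b" and deg: "degree Q \<le> k"
    and orth: "\<And>r. degree r \<le> k \<Longrightarrow> ((\<lambda>s. (g s - poly Q s) * poly r s) has_integral 0) {a..b}"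
  shows "tproj a b k g = poly Q"
proof -
  have "(THE P. degree P \<le> k \<and>
      (\<forall>r :: real poly. degree r \<le> k \<longrightarrow> integral {a..b} (\<lambda>s. (g s - poly P s) * poly r s) = 0)) = Q"
  proof (rule the_equality)
    show "degree Q \<le> k \<and> (\<forall>r :: real poly. degree r \<le> k \<longrightarrow> integral {a..b} (\<lambda>s. (g s - poly Q s) * poly r s) = 0)"
      using deg orth integral_unique by blast
  next
    fix P assume P: "degree P \<le> k \<and> (\<forall>r :: real poly. degree r \<le> k \<longrightarrow> integral {a..b} (\<lambda>s. (g s - poly P s) * poly r s) = 0)"
    define R where "R = Q - P"
    have deg_R: "degree R \<le> k" unfolding R_def using P deg
      by (intro order.trans[OF degree_diff_le_max] max.boundedI) auto
    have "(\<lambda>s. (g s - poly P s) * poly R s) = (\<lambda>s. (g s - poly Q s) * poly R s + poly R s * poly R s)"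
      unfolding R_def by (auto simp: algebra_simps)
    moreover have "(\<lambda>s. poly R s * poly R s) integrable_on {a..b}"
      by (intro integrable_continuous_interval continuous_intros)
    ultimately have "integral {a..b} (\<lambda>s. (g s - poly P s) * poly R s) = integral {a..b} (\<lambda>s. poly R s * poly R s)"
      using integral_add[OF has_integral_integrable[OF orth[OF deg_R]]] integral_unique[OF orth[OF deg_R]]
      by simp
    then have "((\<lambda>s. poly R s * poly R s) has_integral 0) {a..b}"
      using P deg_R \<open>(\<lambda>s. poly R s * poly R s) integrable_on {a..b}\<close> by (simp add: has_integral_integral)
    then have "R = 0" by (rule poly_eq_0_if_square_integral_0[OF ab])
    then show "P = Q" unfolding R_def by simp
  qed
  then show ?thesis unfolding tproj_def by simp
qed

lemma poly_minus_tproj: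
  assumes ab: "a < b" and q: "1 \<le> q" and deg: "degree P \<le> q"
    and g: "\<And>r. r \<in> {a<..<b} \<Longrightarrow> g r = poly P r"
    and s: "s \<in> {a<..<b}"
  shows "g s - tproj a b (q - 1) g s = coeff P q / legendre_lead a b q * legendre_on a b q s"
proof -
  define \<mu> where "\<mu> = coeff P q / legendre_lead a b q"
  define Q where "Q = P - smult \<mu> (legendre_poly a b q)"
  have lead: "legendre_lead a b q \<noteq> 0" using legendre_lead_pos[OF ab, of q] by simp
  have "degree Q \<le> q" unfolding Q_def
    by (intro order.trans[OF degree_diff_le_max] max.boundedI deg order.trans[OF degree_smult_le]
        degree_legendre_poly)
  moreover have "degree Q \<noteq> q"
  proof
    assume "degree Q = q"
    with q have "lead_coeff Q \<noteq> 0" by auto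
    moreover have "coeff Q q = 0" unfolding Q_def \<mu>_def using lead by (simp add: coeff_legendre_poly_top)
    ultimately show False using \<open>degree Q = q\<close> by simp
  qed
  ultimately have deg_Q: "degree Q \<le> q - 1" by simp
  have "((\<lambda>s. (g s - poly Q s) * poly r s) has_integral 0) {a..b}" if deg_r: "degree r \<le> q - 1" for r
  proof (rule has_integral_spike[of "{a, b}"])
    have deg_r': "degree r \<le> q" using deg_r by simp
    have "coeff r q = 0" using deg_r q by (intro coeff_eq_0) auto
    then show "((\<lambda>s. \<mu> * (legendre_on a b q s * poly r s)) has_integral 0) {a..b}"
      using has_integral_mult_right[OF legendre_on_poly_integral[OF ab deg_r']] by simp
    show "(g x - poly Q x) * poly r x = \<mu> * (legendre_on a b q x * poly r x)" if "x \<in> {a..b} - {a, b}" for x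
      using g[of x] that unfolding Q_def by (simp add: poly_legendre_poly algebra_simps)
  qed simp
  then have "tproj a b (q - 1) g = poly Q" by (rule tproj_eqI[OF ab deg_Q])
  then show ?thesis using g[OF s] unfolding Q_def \<mu>_def by (simp add: poly_legendre_poly)
qed

lemma tproj_defect_power_sum:
  assumes "a < b" "1 \<le> q" "\<And>r. r \<in> {a<..<b} \<Longrightarrow> g r = (\<Sum>j\<le>q. c j * r^j)" "s \<in> {a<..<b}"
  shows "g s - tproj a b (q - 1) g s = c q / legendre_lead a b q * legendre_on a b q s"
proof -
  define P where "P = (\<Sum>j\<le>q. monom (c j) j)"
  have "degree P \<le> q" unfolding P_def
    by (intro degree_sum_le) (auto intro: order.trans[OF degree_monom_le])
  moreover have "coeff P q = c q" unfolding P_def by (simp add: coeff_sum coeff_monom)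
  moreover have "g r = poly P r" if "r \<in> {a<..<b}" for r
    using assms(3)[OF that] unfolding P_def by (simp add: poly_sum poly_monom)
  ultimately show ?thesis using poly_minus_tproj[OF assms(1,2)] assms(4) by metis
qed

lemma tproj_defect_linear_times_derivative:
  assumes "a < b" "1 \<le> q"
    and "\<And>r. r \<in> {a<..<b} \<Longrightarrow> g r = (\<theta> - lam * (r - a)) * (\<Sum>j\<le>q. real j * r^(j-1) * e j)"
    and "s \<in> {a<..<b}"
  shows "g s - tproj a b (q - 1) g s = - lam * real q * e q / legendre_lead a b q * legendre_on a b q s"
proof -
  define S where "S = (\<Sum>j\<le>q. monom (real j * e j) (j - 1))"
  define P where "P = [:\<theta> + lam * a, - lam:] * S"
  have deg_S: "degree S \<le> q - 1" unfolding S_def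
    by (intro degree_sum_le) (auto intro: order.trans[OF degree_monom_le])
  have "degree P \<le> 1 + (q - 1)"
    unfolding P_def using deg_S by (intro order.trans[OF degree_mult_le] add_mono) auto
  then have deg_P: "degree P \<le> q" using assms(2) by simp
  have "coeff S (q - 1) = (\<Sum>j\<in>{q}. if j - 1 = q - 1 then real j * e j else 0)"
    unfolding S_def coeff_sum coeff_monom
    by (rule sum.mono_neutral_right) (use assms(2) in auto)
  moreover have "coeff S q = 0" using deg_S assms(2) by (intro coeff_eq_0) auto
  moreover have "coeff P q = (\<theta> + lam * a) * coeff S q - lam * coeff S (q - 1)"
    unfolding P_def using assms(2) by (cases q) (auto simp: mult_pCons_left coeff_pCons)
  ultimately have "coeff P q = - lam * real q * e q" by simp
  moreover have "g r = poly P r" if "r \<in> {a<..<b}" for r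
    using assms(3)[OF that] unfolding P_def S_def by (simp add: poly_sum poly_monom algebra_simps)
  ultimately show ?thesis using poly_minus_tproj[OF assms(1,2) deg_P] assms(4) by metis
qed

section \<open>Piecewise polynomials on a simplicial mesh\<close>

definition monomial_grad :: "('d::finite \<Rightarrow> nat) \<Rightarrow> real^'d \<Rightarrow> real^'d" where
  "monomial_grad \<alpha> x = (\<chi> i. of_nat (\<alpha> i) * (x$i)^(\<alpha> i - 1) * (\<Prod>j\<in>UNIV-{i}. (x$j)^(\<alpha> j)))"

lemma has_derivative_monomial:
  fixes \<alpha> :: "'d::finite \<Rightarrow> nat"
  shows "((\<lambda>x::real^'d. \<Prod>i\<in>UNIV. (x$i)^(\<alpha> i)) has_derivative (\<lambda>h. monomial_grad \<alpha> x \<bullet> h)) (at x)"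
proof -
  have "((\<lambda>x::real^'d. (x$i)^(\<alpha> i)) has_derivative (\<lambda>h. of_nat (\<alpha> i) * (x$i)^(\<alpha> i - 1) * h$i)) (at x)" for i
    using has_derivative_power[OF bounded_linear_imp_has_derivative[OF bounded_linear_vec_nth], of i "\<alpha> i"]
    by (simp add: mult_ac)
  then have "((\<lambda>x::real^'d. \<Prod>i\<in>UNIV. (x$i)^(\<alpha> i)) has_derivative
     (\<lambda>h. \<Sum>i\<in>UNIV. of_nat (\<alpha> i) * (x$i)^(\<alpha> i - 1) * h$i * (\<Prod>j\<in>UNIV - {i}. (x$j)^(\<alpha> j)))) (at x)"
    by (rule has_derivative_prod)
  moreover have "(\<lambda>h. \<Sum>i\<in>UNIV. of_nat (\<alpha> i) * (x$i)^(\<alpha> i - 1) * h$i * (\<Prod>j\<in>UNIV - {i}. (x$j)^(\<alpha> j)))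
      = (\<lambda>h. monomial_grad \<alpha> x \<bullet> h)"
    by (simp add: fun_eq_iff monomial_grad_def inner_vec_def mult_ac)
  ultimately show ?thesis by simp
qed

lemma mpoly_le_has_derivative:
  fixes P :: "real^'d::finite \<Rightarrow> real"
  assumes "mpoly_le p P"
  obtains G where "continuous_on UNIV G" "\<And>x. (P has_derivative (\<lambda>h. G x \<bullet> h)) (at x)"
proof -
  obtain c :: "('d \<Rightarrow> nat) \<Rightarrow> real" where
    "\<forall>x. P x = (\<Sum>\<alpha>\<in>{\<alpha>. sum \<alpha> UNIV \<le> p}. c \<alpha> * (\<Prod>i\<in>UNIV. (x$i) ^ (\<alpha> i)))"
    using assms unfolding mpoly_le_def by blast
  then have P: "P = (\<lambda>x. \<Sum>\<alpha>\<in>{\<alpha>. sum \<alpha> UNIV \<le> p}. c \<alpha> * (\<Prod>i\<in>UNIV. (x$i) ^ (\<alpha> i)))" by auto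
  define G where "G x = (\<Sum>\<alpha>\<in>{\<alpha>. sum \<alpha> UNIV \<le> p}. c \<alpha> *\<^sub>R monomial_grad \<alpha> x)" for x
  show ?thesis
  proof
    show "continuous_on UNIV G"
      unfolding G_def monomial_grad_def by (intro continuous_intros continuous_on_vec_lambda)
    show "(P has_derivative (\<lambda>h. G x \<bullet> h)) (at x)" for x
      unfolding P G_def inner_sum_left inner_scaleR_left
      by (intro has_derivative_sum has_derivative_mult_right has_derivative_monomial)
  qed
qed

lemma grad_eqI:
  fixes f g :: "real^'d::finite \<Rightarrow> real"
  assumes "open U" "x \<in> U" "\<And>y. y \<in> U \<Longrightarrow> f y = g y" "(g has_derivative (\<lambda>h. D \<bullet> h)) (at x)"
  shows "grad f x = D"
proof -
  have "(f has_derivative (\<lambda>h. D \<bullet> h)) (at x)"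
    by (rule has_derivative_transform_within_open[OF assms(4) assms(1,2)]) (simp add: assms(3))
  then have "frechet_derivative f (at x) = (\<lambda>h. D \<bullet> h)" by (simp add: frechet_derivative_at[symmetric])
  then show ?thesis unfolding grad_def by (simp add: vec_eq_iff inner_axis)
qed

lemma grad_lincomb:
  fixes v :: "nat \<Rightarrow> real^'d::finite \<Rightarrow> real"
  assumes "open U" "x \<in> U"
    and v: "\<And>j. j \<le> q \<Longrightarrow> (v j has_derivative (\<lambda>h. grad (v j) x \<bullet> h)) (at x)"
    and f: "\<And>y. y \<in> U \<Longrightarrow> f y = (\<Sum>j\<le>q. v j y * w j)"
  shows "grad f x = (\<Sum>j\<le>q. w j *\<^sub>R grad (v j) x)"
proof (rule grad_eqI[OF assms(1,2) f])
  have "((\<lambda>y. \<Sum>j\<le>q. v j y * w j) has_derivative (\<lambda>h. \<Sum>j\<le>q. (grad (v j) x \<bullet> h) * w j)) (at x)"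
    by (intro has_derivative_sum has_derivative_mult_left v) auto
  then show "((\<lambda>y. \<Sum>j\<le>q. v j y * w j) has_derivative (\<lambda>h. (\<Sum>j\<le>q. w j *\<^sub>R grad (v j) x) \<bullet> h)) (at x)"
    by (simp add: inner_sum_left mult.commute)
qed

definition mesh_skeleton :: "(real^'d) set set \<Rightarrow> (real^'d) set" where
  "mesh_skeleton Th = \<Union>(frontier ` Th)"

lemma simplicial_mesh_compact_convex:
  assumes "simplicial_mesh \<Omega> Th" "K \<in> Th"
  shows "compact K" "convex K"
proof -
  obtain S where "finite S" "K = convex hull S"
    using assms unfolding simplicial_mesh_def is_simplex_def by blast
  then show "compact K" "convex K" by (auto simp: compact_convex_hull finite_imp_compact)
qed

lemma simplicial_mesh_skeleton:
  assumes "simplicial_mesh \<Omega> Th"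
  shows "negligible (mesh_skeleton Th)" "closed (mesh_skeleton Th)"
proof -
  have "finite Th" using assms by (simp add: simplicial_mesh_def)
  show "negligible (mesh_skeleton Th)"
    unfolding mesh_skeleton_def
    by (rule negligible_Union)
      (use \<open>finite Th\<close> simplicial_mesh_compact_convex[OF assms] in \<open>auto intro!: negligible_convex_frontier\<close>)
  show "closed (mesh_skeleton Th)"
    unfolding mesh_skeleton_def using \<open>finite Th\<close> by (intro closed_Union) auto
qed

lemma simplicial_mesh_interior_cover:
  assumes mesh: "simplicial_mesh \<Omega> Th" and x: "x \<in> \<Omega> - mesh_skeleton Th"
  obtains K where "K \<in> Th" "x \<in> interior K"
proof -
  have "\<Union>Th = closure \<Omega>" using mesh by (simp add: simplicial_mesh_def)
  then have "x \<in> \<Union>Th" using x closure_subset by blast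
  then obtain K where K: "K \<in> Th" "x \<in> K" by blast
  have "x \<notin> frontier K" using x K by (auto simp: mesh_skeleton_def)
  moreover have "closed K" using simplicial_mesh_compact_convex(1)[OF mesh K(1)] by (rule compact_imp_closed)
  ultimately have "x \<in> interior K" using K(2) by (simp add: frontier_def closure_closed)
  with K(1) show ?thesis by (rule that)
qed

lemma Vh_piecewise_gradient:
  assumes "v \<in> Vh \<Omega> Th p" "K \<in> Th"
  obtains G where "continuous_on UNIV G"
    "\<And>x. x \<in> interior K \<Longrightarrow> (v has_derivative (\<lambda>h. G x \<bullet> h)) (at x)"
    "\<And>x. x \<in> interior K \<Longrightarrow> grad v x = G x"
proof -
  obtain P where P: "mpoly_le p P" "\<And>x. x \<in> K \<Longrightarrow> v x = P x"
    using assms unfolding Vh_def by blast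
  obtain G where G: "continuous_on UNIV G" "\<And>x. (P has_derivative (\<lambda>h. G x \<bullet> h)) (at x)"
    using mpoly_le_has_derivative[OF P(1)] by blast
  have vP: "v y = P y" if "y \<in> interior K" for y using P(2) interior_subset that by blast
  show ?thesis
  proof
    show "(v has_derivative (\<lambda>h. G x \<bullet> h)) (at x)" if "x \<in> interior K" for x
      by (rule has_derivative_transform_within_open[OF G(2) open_interior that]) (simp add: vP)
    show "grad v x = G x" if "x \<in> interior K" for x
      by (rule grad_eqI[OF open_interior that vP G(2)])
  qed (fact G(1))
qed

context
  fixes \<Omega> :: "(real^'d) set" and Th p v
  assumes mesh: "simplicial_mesh \<Omega> Th" and v: "v \<in> Vh \<Omega> Th p"
begin

lemma Vh_has_derivative_off_skeleton:
  assumes "x \<in> \<Omega> - mesh_skeleton Th"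
  shows "(v has_derivative (\<lambda>h. grad v x \<bullet> h)) (at x)"
proof -
  obtain K where K: "K \<in> Th" "x \<in> interior K" using simplicial_mesh_interior_cover[OF mesh assms] .
  obtain G where G: "continuous_on UNIV G"
    "\<And>x. x \<in> interior K \<Longrightarrow> (v has_derivative (\<lambda>h. G x \<bullet> h)) (at x)"
    "\<And>x. x \<in> interior K \<Longrightarrow> grad v x = G x"
    by (rule Vh_piecewise_gradient[OF v K(1)]) blast
  show ?thesis using G(2,3)[OF K(2)] by simp
qed

lemma Vh_grad_continuous_off_skeleton: "continuous_on (\<Omega> - mesh_skeleton Th) (grad v)"
proof (rule continuous_at_imp_continuous_on, rule ballI)
  fix x assume "x \<in> \<Omega> - mesh_skeleton Th"
  then obtain K where K: "K \<in> Th" "x \<in> interior K" using simplicial_mesh_interior_cover[OF mesh] by blast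
  obtain G where G: "continuous_on UNIV G"
      "\<And>x. x \<in> interior K \<Longrightarrow> (v has_derivative (\<lambda>h. G x \<bullet> h)) (at x)"
      "\<And>x. x \<in> interior K \<Longrightarrow> grad v x = G x"
    by (rule Vh_piecewise_gradient[OF v K(1)]) blast
  have "continuous_on (interior K) (grad v)"
    using continuous_on_subset[OF G(1)] G(3) by (auto intro: continuous_on_eq)
  then show "isCont (grad v) x" using K(2) continuous_on_eq_continuous_at[OF open_interior] by blast
qed

lemma Vh_grad_bounded_off_skeleton: "\<exists>B. \<forall>x\<in>\<Omega> - mesh_skeleton Th. norm (grad v x) \<le> B"
proof -
  have "bounded (grad v ` interior K)" if K: "K \<in> Th" for K
  proof -
    obtain G where G: "continuous_on UNIV G"
        "\<And>x. x \<in> interior K \<Longrightarrow> (v has_derivative (\<lambda>h. G x \<bullet> h)) (at x)"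
        "\<And>x. x \<in> interior K \<Longrightarrow> grad v x = G x"
      by (rule Vh_piecewise_gradient[OF v K]) blast
    have "bounded (G ` K)"
      using simplicial_mesh_compact_convex(1)[OF mesh K] continuous_on_subset[OF G(1)]
      by (intro compact_imp_bounded compact_continuous_image) auto
    moreover have "grad v ` interior K \<subseteq> G ` K" using G(3) interior_subset by fastforce
    ultimately show ?thesis by (rule bounded_subset)
  qed
  moreover have "finite Th" using mesh by (simp add: simplicial_mesh_def)
  ultimately have "bounded (\<Union>K\<in>Th. grad v ` interior K)" by (intro bounded_UN) auto
  moreover have "grad v ` (\<Omega> - mesh_skeleton Th) \<subseteq> (\<Union>K\<in>Th. grad v ` interior K)"
  proof (rule image_subsetI)
    fix x assume "x \<in> \<Omega> - mesh_skeleton Th"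
    then obtain K where "K \<in> Th" "x \<in> interior K" by (rule simplicial_mesh_interior_cover[OF mesh])
    then show "grad v x \<in> (\<Union>K\<in>Th. grad v ` interior K)" by blast
  qed
  ultimately have "bounded (grad v ` (\<Omega> - mesh_skeleton Th))" by (rule bounded_subset)
  then show ?thesis by (simp add: bounded_iff)
qed

end

section \<open>Separable integrands\<close>

lemma has_integral_lborel_product:
  fixes F :: "'a::euclidean_space \<Rightarrow> real" and G :: "'b::euclidean_space \<Rightarrow> real"
  assumes iF: "integrable lborel F" and iG: "integrable lborel G"
  shows "((\<lambda>(x, y). F x * G y) has_integral (integral\<^sup>L lborel F * integral\<^sup>L lborel G)) UNIV"
proof -
  have [measurable]: "F \<in> borel_measurable lborel" "G \<in> borel_measurable lborel" using iF iG by auto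
  have iP: "integrable (lborel \<Otimes>\<^sub>M lborel) (\<lambda>(x, y). F x * G y)"
  proof (rule lborel_pair.Fubini_integrable)
    have "(\<lambda>x. \<integral>y. norm (case (x, y) of (x, y) \<Rightarrow> F x * G y) \<partial>lborel) = (\<lambda>x. norm (F x) * (\<integral>y. norm (G y) \<partial>lborel))"
      by (simp add: abs_mult)
    moreover have "integrable lborel (\<lambda>x. norm (F x) * (\<integral>y. norm (G y) \<partial>lborel))"
      by (intro integrable_mult_left integrable_norm iF)
    ultimately show "integrable lborel (\<lambda>x. \<integral>y. norm (case (x, y) of (x, y) \<Rightarrow> F x * G y) \<partial>lborel)" by simp
    show "AE x in lborel. integrable lborel (\<lambda>y. case (x, y) of (x, y) \<Rightarrow> F x * G y)"
      using iG by (simp add: integrable_mult_right)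
  qed measurable
  have "integral\<^sup>L (lborel \<Otimes>\<^sub>M lborel) (\<lambda>(x, y). F x * G y) = (\<integral>x. (\<integral>y. F x * G y \<partial>lborel) \<partial>lborel)"
    using lborel_pair.integral_fst[OF iP] by simp
  also have "\<dots> = integral\<^sup>L lborel F * integral\<^sup>L lborel G" by simp
  finally show ?thesis
    using has_integral_integral_lborel[of "\<lambda>(x, y). F x * G y"] iP by (simp add: lborel_prod)
qed

lemma has_integral_separable_product:
  fixes \<alpha> :: "'a::euclidean_space \<Rightarrow> real" and \<beta> :: "real \<Rightarrow> real"
  assumes ia: "set_integrable lborel A \<alpha>" and cb: "continuous_on {a..b} \<beta>"
  shows "((\<lambda>(x,s). \<alpha> x * \<beta> s) has_integral (integral A \<alpha> * integral {a..b} \<beta>)) (A \<times> {a<..<b})"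
proof -
  have ib: "set_integrable lborel {a<..<b} \<beta>"
    by (rule set_integrable_subset[OF borel_integrable_atLeastAtMost'[OF cb]]) auto
  define F where "F x = indicator A x * \<alpha> x" for x
  define G where "G s = indicator {a<..<b} s * \<beta> s" for s
  have "((\<lambda>(x, s). F x * G s) has_integral (integral\<^sup>L lborel F * integral\<^sup>L lborel G)) UNIV"
    using ia ib unfolding set_integrable_def F_def G_def by (intro has_integral_lborel_product) simp_all
  moreover have "(\<lambda>(x, s). F x * G s) = (\<lambda>z. if z \<in> A \<times> {a<..<b} then (case z of (x,s) \<Rightarrow> \<alpha> x * \<beta> s) else 0)"
    by (auto simp: F_def G_def indicator_def fun_eq_iff)
  moreover have "integral\<^sup>L lborel F = integral A \<alpha>"
    using set_borel_integral_eq_integral(2)[OF ia] unfolding set_lebesgue_integral_def F_def by simp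
  moreover have "integral\<^sup>L lborel G = integral {a..b} \<beta>"
    using set_borel_integral_eq_integral(2)[OF ib] unfolding set_lebesgue_integral_def G_def
    by (simp add: integral_open_interval_real)
  ultimately show ?thesis by (simp add: has_integral_restrict_UNIV)
qed

lemma has_integral_separable_sum:
  fixes \<alpha> :: "nat \<Rightarrow> 'a::euclidean_space \<Rightarrow> real" and \<beta> :: "nat \<Rightarrow> real \<Rightarrow> real"
  assumes "\<And>j. j \<le> q \<Longrightarrow> set_integrable lborel A (\<alpha> j)" "\<And>j. j \<le> q \<Longrightarrow> continuous_on {a..b} (\<beta> j)"
  shows "((\<lambda>(x,s). \<Sum>j\<le>q. \<alpha> j x * \<beta> j s) has_integral
           (\<Sum>j\<le>q. integral A (\<alpha> j) * integral {a..b} (\<beta> j))) (A \<times> {a<..<b})"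
  unfolding case_prod_beta'
  using assms by (intro has_integral_sum has_integral_separable_product[unfolded case_prod_beta']) auto

lemma set_integrable_bounded_continuous:
  fixes f :: "'a::euclidean_space \<Rightarrow> real"
  assumes S: "open S" "bounded S" and f: "continuous_on S f" and B: "\<And>x. x \<in> S \<Longrightarrow> norm (f x) \<le> B"
  shows "set_integrable lborel S f"
proof -
  have "integrable lborel (\<lambda>x. indicator S x *\<^sub>R (indicator S x *\<^sub>R f x))"
  proof (rule integrableI_bounded_set_indicator[where B=B])
    show "(\<lambda>x. indicator S x *\<^sub>R f x) \<in> borel_measurable lborel"
      using borel_measurable_continuous_on_indicator[OF borel_open[OF S(1)] f] by simp
    show "emeasure lborel S < \<infinity>" using S(2) by (rule emeasure_bounded_finite)
    show "AE x\<in>S in lborel. norm (indicator S x *\<^sub>R f x) \<le> B" using B by auto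
  qed (use S in auto)
  moreover have "(\<lambda>x. indicator S x *\<^sub>R (indicator S x *\<^sub>R f x)) = (\<lambda>x. indicator S x *\<^sub>R f x)"
    by (simp add: fun_eq_iff indicator_def)
  ultimately show ?thesis unfolding set_integrable_def by (simp only:)
qed

lemma negligible_Times_UNIV:
  fixes N :: "'a::euclidean_space set"
  assumes "negligible N" "closed N"
  shows "negligible (N \<times> (UNIV :: real set))"
proof -
  have Nb: "N \<in> sets lborel" using assms(2) by simp
  have "N \<in> null_sets lebesgue" using assms(1) negligible_iff_null_sets by blast
  then have N0: "N \<in> null_sets lborel" using null_sets_completion_iff[OF Nb] by simp
  have "N \<times> UNIV \<in> null_sets (lborel \<Otimes>\<^sub>M (lborel :: real measure))"
    by (rule lborel.times_in_null_sets1[OF N0]) simp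
  then have P: "N \<times> (UNIV :: real set) \<in> null_sets lborel" by (simp add: lborel_prod)
  then have "N \<times> (UNIV :: real set) \<in> null_sets lebesgue"
    using null_sets_completion_iff[of "N \<times> UNIV" lborel] null_setsD2[OF P] by auto
  then show ?thesis using negligible_iff_null_sets by blast
qed

section \<open>One space-time slab\<close>

context
  fixes \<Omega> :: "(real^'d) set" and Th :: "(real^'d) set set" and p q :: nat and a b :: real
    and v :: "nat \<Rightarrow> real^'d \<Rightarrow> real" and u :: "real^'d \<Rightarrow> real \<Rightarrow> real"
  assumes open_\<Omega>: "open \<Omega>" and bounded_\<Omega>: "bounded \<Omega>" and mesh: "simplicial_mesh \<Omega> Th"
    and q: "1 \<le> q" and ab: "a < b"
    and v: "\<And>j. j \<le> q \<Longrightarrow> v j \<in> Vh \<Omega> Th p"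
    and u: "\<And>x s. s \<in> {a..b} \<Longrightarrow> u x s = (\<Sum>j\<le>q. v j x * s^j)"
begin

lemma slab_grad_lincomb:
  assumes "x \<in> \<Omega> - mesh_skeleton Th" "\<And>y. y \<in> \<Omega> \<Longrightarrow> f y = (\<Sum>j\<le>q. v j y * w j)"
  shows "grad f x = (\<Sum>j\<le>q. w j *\<^sub>R grad (v j) x)"
  using assms Vh_has_derivative_off_skeleton[OF mesh v]
  by (intro grad_lincomb[OF open_\<Omega>]) auto

lemma slab_deriv:
  assumes "s \<in> {a<..<b}"
  shows "deriv (u y) s = (\<Sum>j\<le>q. v j y * (real j * s^(j-1)))"
proof (rule DERIV_imp_deriv)
  have "((\<lambda>s. \<Sum>j\<le>q. v j y * s^j) has_field_derivative (\<Sum>j\<le>q. v j y * (real j * s^(j-1)))) (at s)"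
    by (rule derivative_eq_intros refl | simp add: mult_ac)+
  then show "(u y has_field_derivative (\<Sum>j\<le>q. v j y * (real j * s^(j-1)))) (at s)"
    by (rule has_field_derivative_transform_within_open[where S="{a<..<b}"]) (use assms u in auto)
qed

lemma slab_sigma:
  assumes sig: "\<forall>x\<in>\<Omega>. \<forall>s\<in>{a<..<b}. u x s = \<sigma> x * legendre_on a b q s + tproj a b (q - 1) (u x) s"
    and y: "y \<in> \<Omega>"
  shows "\<sigma> y = v q y / legendre_lead a b q"
proof -
  obtain s where s: "s \<in> {a<..<b}" "legendre_on a b q s \<noteq> 0" using legendre_on_nonzero[OF ab] .
  have "\<sigma> y * legendre_on a b q s = u y s - tproj a b (q - 1) (u y) s" using sig y s(1) by simp
  also have "\<dots> = v q y / legendre_lead a b q * legendre_on a b q s"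
    by (rule tproj_defect_power_sum[OF ab q _ s(1)]) (use u in auto)
  finally show ?thesis using mult_right_cancel[OF s(2)] by blast
qed

lemma slab_integrand:
  fixes \<theta> lam :: real
  defines "F \<equiv> \<lambda>x s. (\<theta> - lam * (s - a)) *\<^sub>R grad (\<lambda>y. deriv (u y) s) x"
  assumes x: "x \<in> \<Omega> - mesh_skeleton Th" and s: "s \<in> {a<..<b}"
  shows "grad (\<lambda>y. u y s) x \<bullet> (F x s - tprojv a b (q - 1) (F x) s)
       = (\<Sum>j\<le>q. (grad (v j) x \<bullet> grad (v q) x) *
            (- lam * real q / legendre_lead a b q * (legendre_on a b q s * s^j)))"
proof -
  have grad_u: "grad (\<lambda>y. u y s) x = (\<Sum>j\<le>q. s^j *\<^sub>R grad (v j) x)"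
    by (rule slab_grad_lincomb[OF x]) (use u s in \<open>auto simp: mult.commute\<close>)
  have grad_du: "grad (\<lambda>y. deriv (u y) r) x = (\<Sum>j\<le>q. (real j * r^(j-1)) *\<^sub>R grad (v j) x)"
    if "r \<in> {a<..<b}" for r
    by (rule slab_grad_lincomb[OF x]) (use slab_deriv[OF that] in auto)
  have "(F x s - tprojv a b (q - 1) (F x) s) $ i
      = (- lam * real q / legendre_lead a b q * legendre_on a b q s) * grad (v q) x $ i" for i
  proof -
    have "F x r $ i = (\<theta> - lam * (r - a)) * (\<Sum>j\<le>q. real j * r^(j-1) * (grad (v j) x $ i))"
      if "r \<in> {a<..<b}" for r
      using grad_du[OF that] unfolding F_def by (simp add: sum_component mult_ac)
    from tproj_defect_linear_times_derivative[OF ab q this s]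
    show ?thesis by (simp add: tprojv_def)
  qed
  then have "F x s - tprojv a b (q - 1) (F x) s
      = (- lam * real q / legendre_lead a b q * legendre_on a b q s) *\<^sub>R grad (v q) x"
    by (simp add: vec_eq_iff)
  then show ?thesis
    unfolding grad_u by (simp add: inner_sum_left sum_distrib_left sum_negf mult_ac)
qed

lemma slab_grad_inner_integrable:
  assumes "j \<le> q" "k \<le> q"
  shows "set_integrable lborel (\<Omega> - mesh_skeleton Th) (\<lambda>x. grad (v j) x \<bullet> grad (v k) x)"
proof -
  obtain B1 where B1: "\<forall>x\<in>\<Omega> - mesh_skeleton Th. norm (grad (v j) x) \<le> B1"
    using Vh_grad_bounded_off_skeleton[OF mesh v[OF assms(1)]] by blast
  obtain B2 where B2: "\<forall>x\<in>\<Omega> - mesh_skeleton Th. norm (grad (v k) x) \<le> B2"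
    using Vh_grad_bounded_off_skeleton[OF mesh v[OF assms(2)]] by blast
  show ?thesis
  proof (rule set_integrable_bounded_continuous)
    show "open (\<Omega> - mesh_skeleton Th)"
      using open_\<Omega> simplicial_mesh_skeleton(2)[OF mesh] by (rule open_Diff)
    show "bounded (\<Omega> - mesh_skeleton Th)" using bounded_\<Omega> by (rule bounded_subset) auto
    show "continuous_on (\<Omega> - mesh_skeleton Th) (\<lambda>x. grad (v j) x \<bullet> grad (v k) x)"
      using Vh_grad_continuous_off_skeleton[OF mesh v[OF assms(1)]]
        Vh_grad_continuous_off_skeleton[OF mesh v[OF assms(2)]]
      by (intro continuous_intros)
    show "norm (grad (v j) x \<bullet> grad (v k) x) \<le> B1 * B2" if "x \<in> \<Omega> - mesh_skeleton Th" for x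
    proof -
      have "norm (grad (v j) x \<bullet> grad (v k) x) \<le> norm (grad (v j) x) * norm (grad (v k) x)"
        by (simp add: Cauchy_Schwarz_ineq2)
      also have "\<dots> \<le> B1 * B2"
        using B1 B2 that by (intro mult_mono) (auto intro: order_trans[OF norm_ge_zero])
      finally show ?thesis .
    qed
  qed
qed

lemma slab_grad_sigma:
  assumes sig: "\<forall>x\<in>\<Omega>. \<forall>s\<in>{a<..<b}. u x s = \<sigma> x * legendre_on a b q s + tproj a b (q - 1) (u x) s"
    and x: "x \<in> \<Omega> - mesh_skeleton Th"
  shows "grad \<sigma> x = (1 / legendre_lead a b q) *\<^sub>R grad (v q) x"
proof -
  have "grad \<sigma> x = (\<Sum>j\<le>q. (if j = q then 1 / legendre_lead a b q else 0) *\<^sub>R grad (v j) x)"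
    by (rule slab_grad_lincomb[OF x]) (simp add: slab_sigma[OF sig] if_distrib[of "\<lambda>c. v _ _ * c"] cong: if_cong)
  then show ?thesis by (simp add: if_distrib[of "\<lambda>c. c *\<^sub>R _"] cong: if_cong)
qed

lemma slab_defect_integral:
  fixes \<theta> lam :: real
  defines "F \<equiv> \<lambda>x s. (\<theta> - lam * (s - a)) *\<^sub>R grad (\<lambda>y. deriv (u y) s) x"
  shows "integral (\<Omega> \<times> {a<..<b}) (\<lambda>(x, s). grad (\<lambda>y. u y s) x \<bullet> (F x s - tprojv a b (q - 1) (F x) s))
       = - lam * real q * (b - a) / ((2 * real q + 1) * (legendre_lead a b q)\<^sup>2)
         * integral (\<Omega> - mesh_skeleton Th) (\<lambda>x. grad (v q) x \<bullet> grad (v q) x)"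
proof -
  let ?\<Omega>\<^sub>0 = "\<Omega> - mesh_skeleton Th"
  let ?lead = "legendre_lead a b q"
  define \<kappa> where "\<kappa> = - lam * real q / ?lead"
  define \<alpha> where "\<alpha> j x = grad (v j) x \<bullet> grad (v q) x" for j x
  define \<beta> where "\<beta> j s = \<kappa> * (legendre_on a b q s * s^j)" for j s
  define f where "f = (\<lambda>(x, s). grad (\<lambda>y. u y s) x \<bullet> (F x s - tprojv a b (q - 1) (F x) s))"
  have \<beta>_integral: "integral {a..b} (\<beta> j) = (if j = q then \<kappa> * (b - a) / ((2 * real q + 1) * ?lead) else 0)"
    if "j \<le> q" for j
  proof -
    have "degree (monom (1::real) j) \<le> q" using that by (simp add: degree_monom_eq)
    from has_integral_mult_right[OF legendre_on_poly_integral[OF ab this], of \<kappa>]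
    have "(\<beta> j has_integral (if j = q then \<kappa> * (b - a) / ((2 * real q + 1) * ?lead) else 0)) {a..b}"
      unfolding \<beta>_def by (cases "j = q") (simp_all add: poly_monom coeff_monom)
    then show ?thesis by (rule integral_unique)
  qed
  have "(f has_integral (\<Sum>j\<le>q. integral ?\<Omega>\<^sub>0 (\<alpha> j) * integral {a..b} (\<beta> j))) (?\<Omega>\<^sub>0 \<times> {a<..<b})"
  proof (rule has_integral_eq)
    show "((\<lambda>(x,s). \<Sum>j\<le>q. \<alpha> j x * \<beta> j s) has_integral
        (\<Sum>j\<le>q. integral ?\<Omega>\<^sub>0 (\<alpha> j) * integral {a..b} (\<beta> j))) (?\<Omega>\<^sub>0 \<times> {a<..<b})"
      using ab slab_grad_inner_integrable unfolding \<alpha>_def \<beta>_def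
      by (intro has_integral_separable_sum) (auto simp: legendre_on_def intro!: continuous_intros)
    show "(\<lambda>(x,s). \<Sum>j\<le>q. \<alpha> j x * \<beta> j s) z = f z" if "z \<in> ?\<Omega>\<^sub>0 \<times> {a<..<b}" for z
      using that slab_integrand unfolding f_def F_def \<alpha>_def \<beta>_def \<kappa>_def by (auto simp: mult_ac)
  qed
  then have "integral (?\<Omega>\<^sub>0 \<times> {a<..<b}) f = integral ?\<Omega>\<^sub>0 (\<alpha> q) * (\<kappa> * (b - a) / ((2 * real q + 1) * ?lead))"
    using \<beta>_integral by (simp add: integral_unique if_distrib[of "\<lambda>c. _ * c"] cong: if_cong)
  moreover have "integral (\<Omega> \<times> {a<..<b}) f = integral (?\<Omega>\<^sub>0 \<times> {a<..<b}) f"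
    by (rule integral_spike_set; rule negligible_subset[OF negligible_Times_UNIV[OF simplicial_mesh_skeleton[OF mesh]]])
      auto
  ultimately show ?thesis
    unfolding f_def[symmetric] \<kappa>_def \<alpha>_def by (simp add: power2_eq_square mult_ac)
qed

lemma slab_grad_sigma_integral:
  assumes sig: "\<forall>x\<in>\<Omega>. \<forall>s\<in>{a<..<b}. u x s = \<sigma> x * legendre_on a b q s + tproj a b (q - 1) (u x) s"
  shows "integral \<Omega> (\<lambda>x. (norm (grad \<sigma> x))\<^sup>2)
       = integral (\<Omega> - mesh_skeleton Th) (\<lambda>x. grad (v q) x \<bullet> grad (v q) x) / (legendre_lead a b q)\<^sup>2"
proof -
  have "integral \<Omega> (\<lambda>x. (norm (grad \<sigma> x))\<^sup>2) = integral (\<Omega> - mesh_skeleton Th) (\<lambda>x. (norm (grad \<sigma> x))\<^sup>2)"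
    by (rule integral_spike_set; rule negligible_subset[OF simplicial_mesh_skeleton(1)[OF mesh]]) auto
  also have "\<dots> = integral (\<Omega> - mesh_skeleton Th) (\<lambda>x. grad (v q) x \<bullet> grad (v q) x / (legendre_lead a b q)\<^sup>2)"
    by (rule integral_cong) (simp add: slab_grad_sigma[OF sig] power_divide power2_norm_eq_inner)
  finally show ?thesis by simp
qed

lemma slab_identity:
  fixes \<theta> lam :: real
  defines "F \<equiv> \<lambda>x s. (\<theta> - lam * (s - a)) *\<^sub>R grad (\<lambda>y. deriv (u y) s) x"
  assumes sig: "\<forall>x\<in>\<Omega>. \<forall>s\<in>{a<..<b}. u x s = \<sigma> x * legendre_on a b q s + tproj a b (q - 1) (u x) s"
  shows "integral (\<Omega> \<times> {a<..<b}) (\<lambda>(x, s). grad (\<lambda>y. u y s) x \<bullet> (F x s - tprojv a b (q - 1) (F x) s))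
       = - lam * real q * (b - a) / (2 * real q + 1) * integral \<Omega> (\<lambda>x. (norm (grad \<sigma> x))\<^sup>2)"
  using legendre_lead_pos[OF ab, of q]
  unfolding F_def slab_defect_integral slab_grad_sigma_integral[OF sig] by (simp add: field_simps)

end

lemma integral_nonneg_square_norm: "0 \<le> integral S (\<lambda>x. (norm (f x))\<^sup>2)"
  by (cases "(\<lambda>x. (norm (f x))\<^sup>2) integrable_on S") (simp_all add: integral_nonneg not_integrable_integral)

theorem mainTheorem6:
  fixes \<Omega> :: "(real^'d) set" and Th :: "(real^'d) set set"
    and p q N n :: nat and tt :: "nat \<Rightarrow> real" and T c \<theta> :: real
    and u :: "real^'d \<Rightarrow> real \<Rightarrow> real" and \<sigma> :: "real^'d \<Rightarrow> real"
  assumes "open \<Omega>" "bounded \<Omega>" "connected \<Omega>" "\<Omega> \<noteq> {}" "interior (closure \<Omega>) = \<Omega>"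
    and "simplicial_mesh \<Omega> Th"
    and "time_partition tt N T"
    and "q \<ge> 1" and "c > 0" and "n \<in> {1..N}"
    and "u \<in> Vht \<Omega> Th p tt N q"
    and "\<forall>x\<in>\<Omega>. \<forall>s\<in>{tt (n - 1)<..<tt n}.
           u x s = \<sigma> x * legendre_on (tt (n - 1)) (tt n) q s + tproj (tt (n - 1)) (tt n) (q - 1) (u x) s"
  shows "let a = tt (n - 1); b = tt n;
             \<zeta> = 1 / (4 * (2 * real q + 1));
             lam = \<zeta> / (b - a);
             \<phi> = (\<lambda>s. \<theta> - lam * (s - a));
             F = (\<lambda>x s. \<phi> s *\<^sub>R grad (\<lambda>y. deriv (u y) s) x);
             lhs = - c\<^sup>2 * integral (\<Omega> \<times> {a<..<b})
                     (\<lambda>(x, s). grad (\<lambda>y. u y s) x \<bullet> (F x s - tprojv a b (q - 1) (F x) s));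
             rhs = c\<^sup>2 * real q * \<zeta> / (2 * real q + 1) * integral \<Omega> (\<lambda>x. (norm (grad \<sigma> x))\<^sup>2)
         in lhs = rhs \<and> rhs \<ge> 0"
proof -
  have ab: "tt (n - 1) < tt n" using assms(7,10) unfolding time_partition_def by blast
  obtain v where v: "\<forall>j\<le>q. v j \<in> Vh \<Omega> Th p"
    and u: "\<forall>x. \<forall>s\<in>{tt (n - 1)..tt n}. u x s = (\<Sum>j\<le>q. v j x * s ^ j)"
    using assms(10,11) unfolding Vht_def by blast
  define \<zeta> :: real where "\<zeta> = 1 / (4 * (2 * real q + 1))"
  define lam where "lam = \<zeta> / (tt n - tt (n - 1))"
  have "integral (\<Omega> \<times> {tt (n - 1)<..<tt n}) (\<lambda>(x, s). grad (\<lambda>y. u y s) x \<bullet>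
          ((\<theta> - lam * (s - tt (n - 1))) *\<^sub>R grad (\<lambda>y. deriv (u y) s) x
           - tprojv (tt (n - 1)) (tt n) (q - 1)
               (\<lambda>s. (\<theta> - lam * (s - tt (n - 1))) *\<^sub>R grad (\<lambda>y. deriv (u y) s) x) s))
      = - lam * real q * (tt n - tt (n - 1)) / (2 * real q + 1) * integral \<Omega> (\<lambda>x. (norm (grad \<sigma> x))\<^sup>2)"
    using slab_identity[OF assms(1,2,6,8) ab _ _ assms(12), where v=v and p=p and \<theta>=\<theta> and lam=lam] v u by simp
  also have "- lam * real q * (tt n - tt (n - 1)) = - \<zeta> * real q"
    unfolding lam_def using ab by simp
  finally show ?thesis
    using integral_nonneg_square_norm[of \<Omega> "grad \<sigma>"]
    unfolding Let_def \<zeta>_def[symmetric] lam_def[symmetric] by (simp add: \<zeta>_def)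
qed

end
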